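(* For every $n\ge2$, the group $\mathcal{AM}(\mathrm{Cr}_n)$ is isomorphic to a semidirect product $(S_n\times S_n)\rtimes\mathbb{Z}_2$.
   Context: $S_n$ is the symmetric group. For $n\ge2$, $\mathrm{Cr}_n$ is the poset $\{x_1,\dots,x_n,y_1,\dots,y_n\}$ whose only relations between distinct elements are $x_i<y_i$ ($1\le i\le n$), $x_{i+1}<y_i$ ($1\le i\le n-1$) and $x_1<y_n$. For a finite connected poset $X$ and $x<y$, $e_{xy}$ denotes the incidence-algebra basis element, and $B=\{e_{xy}:x<y\}$. $\mathcal{C}(X)$ is the set of maximal chains. For a bijection $\theta:B\to B$ and $C:u_1<\dots<u_m$ in $\mathcal{C}(X)$, $\theta$ is increasing on $C$ if there is $D:v_1<\dots<v_m$ in $\mathcal{C}(X)$ with $\theta(e_{u_iu_j})=e_{v_iv_j}$ for all $i<j$, decreasing if $\theta(e_{u_iu_j})=e_{v_{m-j+1}v_{m-i+1}}$ for all $i<j$. $\mathcal{M}(X)$: bijections $B\to B$ increasing or decreasing on every maximal chain. A walk is a sequence $u_0,\dots,u_m$ where for each $i$ one of $u_i,u_{i+1}$ covers the other; closed if $u_0=u_m$. For a closed walk $\Gamma:u_0,\dots,u_m=u_0$ and $z\in X$: $s^+_{\theta,\Gamma}(z)=|\{i: u_i<u_{i+1},\ \exists w>z,\ \theta(e_{zw})=e_{u_iu_{i+1}}\}|$, $s^-_{\theta,\Gamma}(z)=|\{i: u_i>u_{i+1},\ \exists w>z,\ \theta(e_{zw})=e_{u_{i+1}u_i}\}|$, $t^+_{\theta,\Gamma}(z)=|\{i: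 u_i<u_{i+1},\ \exists w<z,\ \theta(e_{wz})=e_{u_iu_{i+1}}\}|$, $t^-_{\theta,\Gamma}(z)=|\{i: u_i>u_{i+1},\ \exists w<z,\ \theta(e_{wz})=e_{u_{i+1}u_i}\}|$, $0\le i\le m-1$. $\theta$ is admissible if $s^+-s^-=t^+-t^-$ at every $z$ for every closed walk; $\mathcal{AM}(X)$ is the set of admissible elements of $\mathcal{M}(X)$, a group under composition. *)

theory Defs
  imports "HOL-Algebra.Sym_Groups" "HOL-Algebra.Elementary_Groups"
begin

definition plt :: "('a \<Rightarrow> 'a \<Rightarrow> bool) \<Rightarrow> 'a \<Rightarrow> 'a \<Rightarrow> bool" where
  "plt R x y \<longleftrightarrow> R x y \<and> x \<noteq> y"

text \<open>The basis B = {e_xy : x < y}; e_xy is represented by the pair (x,y).\<close>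
definition basisB :: "'a set \<Rightarrow> ('a \<Rightarrow> 'a \<Rightarrow> bool) \<Rightarrow> ('a \<times> 'a) set" where
  "basisB X R = {(x, y). x \<in> X \<and> y \<in> X \<and> plt R x y}"

definition is_chain :: "'a set \<Rightarrow> ('a \<Rightarrow> 'a \<Rightarrow> bool) \<Rightarrow> 'a set \<Rightarrow> bool" where
  "is_chain X R C \<longleftrightarrow> C \<subseteq> X \<and> (\<forall>a\<in>C. \<forall>b\<in>C. R a b \<or> R b a)"

definition is_max_chain :: "'a set \<Rightarrow> ('a \<Rightarrow> 'a \<Rightarrow> bool) \<Rightarrow> 'a set \<Rightarrow> bool" where
  "is_max_chain X R C \<longleftrightarrow> is_chain X R C \<and> (\<forall>D. is_chain X R D \<and> C \<subseteq> D \<longrightarrow> D = C)"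

text \<open>A maximal chain u_1 < ... < u_m, written as the strictly increasing list of its elements
  (0-indexed).\<close>
definition max_chain_list :: "'a set \<Rightarrow> ('a \<Rightarrow> 'a \<Rightarrow> bool) \<Rightarrow> 'a list \<Rightarrow> bool" where
  "max_chain_list X R us \<longleftrightarrow> sorted_wrt (plt R) us \<and> is_max_chain X R (set us)"

definition increasing_on ::
  "'a set \<Rightarrow> ('a \<Rightarrow> 'a \<Rightarrow> bool) \<Rightarrow> ('a \<times> 'a \<Rightarrow> 'a \<times> 'a) \<Rightarrow> 'a list \<Rightarrow> bool" where
  "increasing_on X R \<theta> us \<longleftrightarrow>
     (\<exists>vs. max_chain_list X R vs \<and> length vs = length us \<and>
        (\<forall>i j. i < j \<and> j < length us \<longrightarrow> \<theta> (us ! i, us ! j) = (vs ! i, vs ! j)))"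

definition decreasing_on ::
  "'a set \<Rightarrow> ('a \<Rightarrow> 'a \<Rightarrow> bool) \<Rightarrow> ('a \<times> 'a \<Rightarrow> 'a \<times> 'a) \<Rightarrow> 'a list \<Rightarrow> bool" where
  "decreasing_on X R \<theta> us \<longleftrightarrow>
     (\<exists>vs. max_chain_list X R vs \<and> length vs = length us \<and>
        (\<forall>i j. i < j \<and> j < length us \<longrightarrow>
           \<theta> (us ! i, us ! j) = (vs ! (length us - 1 - j), vs ! (length us - 1 - i))))"

definition in_M :: "'a set \<Rightarrow> ('a \<Rightarrow> 'a \<Rightarrow> bool) \<Rightarrow> ('a \<times> 'a \<Rightarrow> 'a \<times> 'a) \<Rightarrow> bool" where
  "in_M X R \<theta> \<longleftrightarrow> bij_betw \<theta> (basisB X R) (basisB X R) \<and>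
     (\<forall>us. max_chain_list X R us \<longrightarrow> increasing_on X R \<theta> us \<or> decreasing_on X R \<theta> us)"

definition covers :: "'a set \<Rightarrow> ('a \<Rightarrow> 'a \<Rightarrow> bool) \<Rightarrow> 'a \<Rightarrow> 'a \<Rightarrow> bool" where
  "covers X R a b \<longleftrightarrow> a \<in> X \<and> b \<in> X \<and> plt R b a \<and>
     \<not> (\<exists>c\<in>X. plt R b c \<and> plt R c a)"

definition is_walk :: "'a set \<Rightarrow> ('a \<Rightarrow> 'a \<Rightarrow> bool) \<Rightarrow> 'a list \<Rightarrow> bool" where
  "is_walk X R us \<longleftrightarrow> us \<noteq> [] \<and> set us \<subseteq> X \<and>
     (\<forall>i. i + 1 < length us \<longrightarrow>
        covers X R (us ! i) (us ! (i + 1)) \<or> covers X R (us ! (i + 1)) (us ! i))"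

definition is_closed_walk :: "'a set \<Rightarrow> ('a \<Rightarrow> 'a \<Rightarrow> bool) \<Rightarrow> 'a list \<Rightarrow> bool" where
  "is_closed_walk X R us \<longleftrightarrow> is_walk X R us \<and> hd us = last us"

definition s_plus where
  "s_plus X R \<theta> us z = card {i. i + 1 < length us \<and> plt R (us ! i) (us ! (i + 1)) \<and>
      (\<exists>w\<in>X. plt R z w \<and> \<theta> (z, w) = (us ! i, us ! (i + 1)))}"

definition s_minus where
  "s_minus X R \<theta> us z = card {i. i + 1 < length us \<and> plt R (us ! (i + 1)) (us ! i) \<and>
      (\<exists>w\<in>X. plt R z w \<and> \<theta> (z, w) = (us ! (i + 1), us ! i))}"

definition t_plus where
  "t_plus X R \<theta> us z = card {i. i + 1 < length us \<and> plt R (us ! i) (us ! (i + 1)) \<and>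
      (\<exists>w\<in>X. plt R w z \<and> \<theta> (w, z) = (us ! i, us ! (i + 1)))}"

definition t_minus where
  "t_minus X R \<theta> us z = card {i. i + 1 < length us \<and> plt R (us ! (i + 1)) (us ! i) \<and>
      (\<exists>w\<in>X. plt R w z \<and> \<theta> (w, z) = (us ! (i + 1), us ! i))}"

definition admissible :: "'a set \<Rightarrow> ('a \<Rightarrow> 'a \<Rightarrow> bool) \<Rightarrow> ('a \<times> 'a \<Rightarrow> 'a \<times> 'a) \<Rightarrow> bool" where
  "admissible X R \<theta> \<longleftrightarrow>
     (\<forall>us. is_closed_walk X R us \<longrightarrow> (\<forall>z\<in>X.
        int (s_plus X R \<theta> us z) - int (s_minus X R \<theta> us z)
          = int (t_plus X R \<theta> us z) - int (t_minus X R \<theta> us z)))"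

definition AM_group :: "'a set \<Rightarrow> ('a \<Rightarrow> 'a \<Rightarrow> bool) \<Rightarrow> ('a \<times> 'a \<Rightarrow> 'a \<times> 'a) monoid" where
  "AM_group X R = \<lparr> carrier = {\<theta>. \<theta> \<in> extensional (basisB X R) \<and> in_M X R \<theta> \<and> admissible X R \<theta>},
     mult = (\<lambda>\<theta> \<phi>. restrict (\<theta> \<circ> \<phi>) (basisB X R)),
     one = restrict id (basisB X R) \<rparr>"

text \<open>x_i is represented by (i, False) and y_i by (i, True), 1 \<le> i \<le> n.\<close>
definition crown_carrier :: "nat \<Rightarrow> (nat \<times> bool) set" where
  "crown_carrier n = {(i, b). 1 \<le> i \<and> i \<le> n}"

definition crown_le :: "nat \<Rightarrow> nat \<times> bool \<Rightarrow> nat \<times> bool \<Rightarrow> bool" where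
  "crown_le n p q \<longleftrightarrow> p \<in> crown_carrier n \<and> q \<in> crown_carrier n \<and>
     (p = q \<or> (\<not> snd p \<and> snd q \<and>
        (fst p = fst q \<or> fst p = fst q + 1 \<or> (fst p = 1 \<and> fst q = n))))"

definition aut_action :: "('a, 'c) monoid_scheme \<Rightarrow> ('b, 'd) monoid_scheme \<Rightarrow> ('b \<Rightarrow> 'a \<Rightarrow> 'a) \<Rightarrow> bool" where
  "aut_action N H \<phi> \<longleftrightarrow>
     (\<forall>h\<in>carrier H. \<phi> h \<in> iso N N) \<and>
     (\<forall>h1\<in>carrier H. \<forall>h2\<in>carrier H. \<forall>x\<in>carrier N.
        \<phi> (h1 \<otimes>\<^bsub>H\<^esub> h2) x = \<phi> h1 (\<phi> h2 x))"

definition semidirect_prod ::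
  "('a, 'c) monoid_scheme \<Rightarrow> ('b, 'd) monoid_scheme \<Rightarrow> ('b \<Rightarrow> 'a \<Rightarrow> 'a) \<Rightarrow> ('a \<times> 'b) monoid" where
  "semidirect_prod N H \<phi> = \<lparr> carrier = carrier N \<times> carrier H,
     mult = (\<lambda>(n1, h1) (n2, h2). (n1 \<otimes>\<^bsub>N\<^esub> \<phi> h1 n2, h1 \<otimes>\<^bsub>H\<^esub> h2)),
     one = (\<one>\<^bsub>N\<^esub>, \<one>\<^bsub>H\<^esub>) \<rparr>"

end

(*
  The Hasse diagram of Cr_n is a cycle of length 2n and every maximal chain is a single edge, so
  M(Cr_n) consists of all permutations of the 2n edges. For a closed walk, s+ - s- and t+ - t- at
  z are the net numbers of traversals of the images of the edges above resp. below z, and flow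
  conservation at every vertex forces a closed walk to traverse each edge x_i < y_i with the same
  net multiplicity w and each edge x_(i+1) < y_i with multiplicity -w. Hence theta is admissible
  iff at every vertex the two edges there are sent to one edge of each kind (for necessity take
  the walk once around the crown, for which w = 1); going around the cycle, theta then either
  preserves the two kinds of edges or exchanges them. Such theta are given by a permutation of
  the indices of each kind together with the choice of exchanging the kinds, and composing them
  is the multiplication of the semidirect product of S_n x S_n by Z_2 acting by swapping factors.
*)
theory Submission
  imports Defs
begin

section \<open>Admissibility as flow conservation\<close>

definition net_flow :: "('a \<times> 'a) set \<Rightarrow> 'a list \<Rightarrow> int" where
  "net_flow E us =
     (\<Sum>i<length us - 1. of_bool ((us ! i, us ! Suc i) \<in> E) - of_bool ((us ! Suc i, us ! i) \<in> E))"

definition edges_above :: "'a set \<Rightarrow> ('a \<Rightarrow> 'a \<Rightarrow> bool) \<Rightarrow> 'a \<Rightarrow> ('a \<times> 'a) set" where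
  "edges_above X R z = {e \<in> basisB X R. fst e = z}"

definition edges_below :: "'a set \<Rightarrow> ('a \<Rightarrow> 'a \<Rightarrow> bool) \<Rightarrow> 'a \<Rightarrow> ('a \<times> 'a) set" where
  "edges_below X R z = {e \<in> basisB X R. snd e = z}"

lemma net_flow_empty [simp]: "net_flow {} us = 0"
  by (simp add: net_flow_def)

lemma net_flow_Un:
  assumes "A \<inter> C = {}"
  shows "net_flow (A \<union> C) us = net_flow A us + net_flow C us"
  unfolding net_flow_def sum.distrib[symmetric]
  by (rule sum.cong) (use assms in auto)

lemma net_flow_pair: "a \<noteq> b \<Longrightarrow> net_flow {a, b} us = net_flow {a} us + net_flow {b} us"
  using net_flow_Un[of "{a}" "{b}" us] by (simp add: insert_is_Un[of a "{b}"])

lemma net_flow_eq_card_steps: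
  "net_flow {(a, b). P a b} us =
     int (card {i. i + 1 < length us \<and> P (us ! i) (us ! (i + 1))})
       - int (card {i. i + 1 < length us \<and> P (us ! (i + 1)) (us ! i)})"
proof -
  have card_steps: "int (card {i. i + 1 < length us \<and> Q i}) = (\<Sum>i<length us - 1. of_bool (Q i))"
    for Q :: "nat \<Rightarrow> bool"
  proof -
    have "{i. i + 1 < length us \<and> Q i} = {..<length us - 1} \<inter> {i. Q i}" by auto
    then show ?thesis by simp
  qed
  show ?thesis
    unfolding net_flow_def card_steps sum_subtractf by simp
qed

lemma s_plus_minus_eq_net_flow:
  assumes "\<theta> ` basisB X R \<subseteq> basisB X R" "z \<in> X"
  shows "int (s_plus X R \<theta> us z) - int (s_minus X R \<theta> us z) = net_flow (\<theta> ` edges_above X R z) us"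
proof -
  let ?P = "\<lambda>a b. plt R a b \<and> (\<exists>w\<in>X. plt R z w \<and> \<theta> (z, w) = (a, b))"
  have "{(a, b). ?P a b} = \<theta> ` edges_above X R z"
    using assms by (force simp: edges_above_def basisB_def)
  then show ?thesis
    using net_flow_eq_card_steps[of ?P us] unfolding s_plus_def s_minus_def by simp
qed

lemma t_plus_minus_eq_net_flow:
  assumes "\<theta> ` basisB X R \<subseteq> basisB X R" "z \<in> X"
  shows "int (t_plus X R \<theta> us z) - int (t_minus X R \<theta> us z) = net_flow (\<theta> ` edges_below X R z) us"
proof -
  let ?P = "\<lambda>a b. plt R a b \<and> (\<exists>w\<in>X. plt R w z \<and> \<theta> (w, z) = (a, b))"
  have "{(a, b). ?P a b} = \<theta> ` edges_below X R z"
    using assms by (force simp: edges_below_def basisB_def)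
  then show ?thesis
    using net_flow_eq_card_steps[of ?P us] unfolding t_plus_def t_minus_def by simp
qed

lemma admissible_iff_net_flow:
  assumes "\<theta> ` basisB X R \<subseteq> basisB X R"
  shows "admissible X R \<theta> \<longleftrightarrow> (\<forall>us. is_closed_walk X R us \<longrightarrow> (\<forall>z\<in>X.
           net_flow (\<theta> ` edges_above X R z) us = net_flow (\<theta> ` edges_below X R z) us))"
  unfolding admissible_def
  by (simp add: s_plus_minus_eq_net_flow[OF assms] t_plus_minus_eq_net_flow[OF assms])

lemma closed_walk_net_flow_conservation:
  assumes "antisymp R" "is_closed_walk X R us"
  shows "net_flow (edges_above X R z) us = net_flow (edges_below X R z) us"
proof -
  define visits where "visits i = (of_bool (us ! i = z) :: int)" for i
  have step: "of_bool ((us ! i, us ! Suc i) \<in> edges_above X R z)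
        - of_bool ((us ! Suc i, us ! i) \<in> edges_above X R z)
      - (of_bool ((us ! i, us ! Suc i) \<in> edges_below X R z)
        - of_bool ((us ! Suc i, us ! i) \<in> edges_below X R z))
      = visits i - visits (Suc i)" if "i < length us - 1" for i
  proof -
    have "covers X R (us ! i) (us ! Suc i) \<or> covers X R (us ! Suc i) (us ! i)"
      using assms(2) that unfolding is_closed_walk_def is_walk_def by auto
    moreover have "\<not> (plt R a b \<and> plt R b a)" for a b
      using assms(1) by (auto simp: plt_def dest: antisympD)
    ultimately show ?thesis
      unfolding visits_def edges_above_def edges_below_def basisB_def covers_def by auto
  qed
  have "net_flow (edges_above X R z) us - net_flow (edges_below X R z) us
      = (\<Sum>i<length us - 1. visits i - visits (Suc i))"
    unfolding net_flow_def sum_subtractf[symmetric] by (rule sum.cong) (auto simp: step)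
  also have "\<dots> = visits 0 - visits (length us - 1)"
    by (rule sum_lessThan_telescope')
  also have "\<dots> = 0"
  proof -
    have "us \<noteq> []" "hd us = last us"
      using assms(2) by (auto simp: is_closed_walk_def is_walk_def)
    then show ?thesis by (simp add: visits_def hd_conv_nth last_conv_nth)
  qed
  finally show ?thesis by simp
qed

section \<open>Posets of height one\<close>

lemma max_chain_list_pair:
  assumes refl: "\<And>a. a \<in> X \<Longrightarrow> R a a"
    and no_3_chain: "\<And>a b c. plt R a b \<Longrightarrow> plt R b c \<Longrightarrow> False"
    and "(a, b) \<in> basisB X R"
  shows "max_chain_list X R [a, b]"
proof -
  from assms(3) have ab: "a \<in> X" "b \<in> X" "plt R a b"
    by (auto simp: basisB_def)
  have chain: "is_chain X R {a, b}"
    using ab refl by (auto simp: is_chain_def plt_def)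
  have maximal: "D = {a, b}" if D: "is_chain X R D" "{a, b} \<subseteq> D" for D
  proof (rule ccontr)
    assume "D \<noteq> {a, b}"
    with D obtain c where c: "c \<in> D" "c \<noteq> a" "c \<noteq> b" by blast
    have "a \<in> D" "b \<in> D" using D(2) by simp_all
    with D(1) c(1) have "R c a \<or> R a c" "R c b \<or> R b c"
      unfolding is_chain_def by blast+
    with c have "plt R c a \<or> plt R a c" "plt R c b \<or> plt R b c"
      by (auto simp: plt_def)
    with ab(3) no_3_chain show False by meson
  qed
  have "is_max_chain X R {a, b}"
    unfolding is_max_chain_def using chain maximal by blast
  with ab(3) show ?thesis
    by (simp add: max_chain_list_def)
qed

lemma max_chain_list_of_height_one:
  assumes refl: "\<And>a. a \<in> X \<Longrightarrow> R a a"
    and no_3_chain: "\<And>a b c. plt R a b \<Longrightarrow> plt R b c \<Longrightarrow> False"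
    and not_isolated: "\<And>a. a \<in> X \<Longrightarrow> \<exists>b\<in>X. plt R a b \<or> plt R b a"
    and "X \<noteq> {}"
  shows "max_chain_list X R us \<longleftrightarrow> (\<exists>a b. us = [a, b] \<and> (a, b) \<in> basisB X R)"
proof
  assume "max_chain_list X R us"
  then have sorted: "sorted_wrt (plt R) us" and chain: "is_chain X R (set us)"
    and maximal: "\<And>D. is_chain X R D \<Longrightarrow> set us \<subseteq> D \<Longrightarrow> D = set us"
    by (auto simp: max_chain_list_def is_max_chain_def)
  from chain have "set us \<subseteq> X" by (simp add: is_chain_def)
  have pair_chain: "is_chain X R {a, b}" if "a \<in> X" "b \<in> X" "plt R a b \<or> plt R b a" for a b
    using that refl by (auto simp: is_chain_def plt_def)
  consider "us = []" | a where "us = [a]" | a b where "us = [a, b]"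
    | a b c cs where "us = a # b # c # cs"
    by (metis list.exhaust)
  then show "\<exists>a b. us = [a, b] \<and> (a, b) \<in> basisB X R"
  proof cases
    case 1
    obtain a where "a \<in> X" using \<open>X \<noteq> {}\<close> by blast
    with not_isolated obtain b where "b \<in> X" "plt R a b \<or> plt R b a" by blast
    with \<open>a \<in> X\<close> have "is_chain X R {a, b}" by (rule pair_chain)
    from maximal[OF this] 1 show ?thesis by simp
  next
    case (2 a)
    with \<open>set us \<subseteq> X\<close> have "a \<in> X" by simp
    with not_isolated obtain b where "b \<in> X" and ab: "plt R a b \<or> plt R b a" by blast
    with \<open>a \<in> X\<close> have "is_chain X R {a, b}" by (rule pair_chain)
    from maximal[OF this] 2 have "b = a" by auto
    with ab show ?thesis by (simp add: plt_def)
  next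
    case (3 a b)
    with sorted \<open>set us \<subseteq> X\<close> show ?thesis by (simp add: basisB_def)
  next
    case (4 a b c cs)
    with sorted have "plt R a b" "plt R b c" by simp_all
    with no_3_chain show ?thesis by blast
  qed
next
  assume "\<exists>a b. us = [a, b] \<and> (a, b) \<in> basisB X R"
  then obtain a b where "us = [a, b]" "(a, b) \<in> basisB X R"
    by blast
  then show "max_chain_list X R us"
    using max_chain_list_pair[where X = X and R = R, OF refl no_3_chain] by simp
qed

lemma in_M_iff_bij_betw:
  assumes "\<And>us. max_chain_list X R us \<longleftrightarrow> (\<exists>a b. us = [a, b] \<and> (a, b) \<in> basisB X R)"
  shows "in_M X R \<theta> \<longleftrightarrow> bij_betw \<theta> (basisB X R) (basisB X R)"
proof -
  have increasing: "increasing_on X R \<theta> [a, b]"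
    if "bij_betw \<theta> (basisB X R) (basisB X R)" "(a, b) \<in> basisB X R" for a b
  proof -
    obtain c d where cd: "\<theta> (a, b) = (c, d)" by fastforce
    with that have "(c, d) \<in> basisB X R" by (metis bij_betw_apply)
    then have "max_chain_list X R [c, d]" by (simp add: assms)
    moreover have "\<forall>i j. i < j \<and> j < length [a, b] \<longrightarrow>
        \<theta> ([a, b] ! i, [a, b] ! j) = ([c, d] ! i, [c, d] ! j)"
      using cd by (auto simp: less_Suc_eq)
    ultimately show ?thesis
      unfolding increasing_on_def by (intro exI[of _ "[c, d]"]) (simp only: length_Cons)
  qed
  show ?thesis
    unfolding in_M_def assms using increasing by blast
qed

lemma aut_action_one:
  assumes "group H" "aut_action N H \<phi>" "x \<in> carrier N"
  shows "\<phi> \<one>\<^bsub>H\<^esub> x = x"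
proof -
  interpret H: group H by (fact assms(1))
  have one: "\<one>\<^bsub>H\<^esub> \<in> carrier H"
    by (rule H.one_closed)
  then have bij: "bij_betw (\<phi> \<one>\<^bsub>H\<^esub>) (carrier N) (carrier N)"
    and hom: "\<phi> \<one>\<^bsub>H\<^esub> \<in> hom N N"
    using assms(2) by (auto simp: aut_action_def iso_def)
  from assms(2,3) one have "\<phi> (\<one>\<^bsub>H\<^esub> \<otimes>\<^bsub>H\<^esub> \<one>\<^bsub>H\<^esub>) x = \<phi> \<one>\<^bsub>H\<^esub> (\<phi> \<one>\<^bsub>H\<^esub> x)"
    unfolding aut_action_def by blast
  then have "\<phi> \<one>\<^bsub>H\<^esub> (\<phi> \<one>\<^bsub>H\<^esub> x) = \<phi> \<one>\<^bsub>H\<^esub> x"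
    by simp
  moreover have "\<phi> \<one>\<^bsub>H\<^esub> x \<in> carrier N"
    using hom assms(3) by (auto simp: hom_def)
  ultimately show ?thesis
    using bij assms(3) by (metis bij_betw_def inj_onD)
qed

lemma semidirect_prod_group:
  assumes "group N" "group H" and action: "aut_action N H \<phi>"
  shows "group (semidirect_prod N H \<phi>)"
proof -
  interpret N: group N by (fact assms(1))
  interpret H: group H by (fact assms(2))
  have hom: "\<phi> h \<in> hom N N" if "h \<in> carrier H" for h
    using action that by (auto simp: aut_action_def iso_def)
  have closed: "\<phi> h x \<in> carrier N" if "h \<in> carrier H" "x \<in> carrier N" for h x
    using hom[OF that(1)] that(2) by (auto simp: hom_def)
  have mult: "\<phi> h (x \<otimes>\<^bsub>N\<^esub> y) = \<phi> h x \<otimes>\<^bsub>N\<^esub> \<phi> h y"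
    if "h \<in> carrier H" "x \<in> carrier N" "y \<in> carrier N" for h x y
    using hom[OF that(1)] that(2,3) by (simp add: hom_mult)
  have one: "\<phi> h \<one>\<^bsub>N\<^esub> = \<one>\<^bsub>N\<^esub>" if "h \<in> carrier H" for h
    using hom[OF that] assms(1) by (simp add: hom_one)
  have compose: "\<phi> (h \<otimes>\<^bsub>H\<^esub> k) x = \<phi> h (\<phi> k x)"
    if "h \<in> carrier H" "k \<in> carrier H" "x \<in> carrier N" for h k x
    using action that by (simp add: aut_action_def)
  show ?thesis
  proof (rule groupI)
    fix x y z
    assume "x \<in> carrier (semidirect_prod N H \<phi>)" "y \<in> carrier (semidirect_prod N H \<phi>)"
      "z \<in> carrier (semidirect_prod N H \<phi>)"
    then show "x \<otimes>\<^bsub>semidirect_prod N H \<phi>\<^esub> y \<otimes>\<^bsub>semidirect_prod N H \<phi>\<^esub> z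
        = x \<otimes>\<^bsub>semidirect_prod N H \<phi>\<^esub> (y \<otimes>\<^bsub>semidirect_prod N H \<phi>\<^esub> z)"
      by (auto simp: semidirect_prod_def closed mult compose N.m_assoc H.m_assoc)
  next
    fix x assume x: "x \<in> carrier (semidirect_prod N H \<phi>)"
    then obtain a h where "x = (a, h)" "a \<in> carrier N" "h \<in> carrier H"
      by (auto simp: semidirect_prod_def)
    then show "\<exists>y\<in>carrier (semidirect_prod N H \<phi>).
        y \<otimes>\<^bsub>semidirect_prod N H \<phi>\<^esub> x = \<one>\<^bsub>semidirect_prod N H \<phi>\<^esub>"
      by (intro bexI[of _ "(\<phi> (inv\<^bsub>H\<^esub> h) (inv\<^bsub>N\<^esub> a), inv\<^bsub>H\<^esub> h)"])
        (auto simp: semidirect_prod_def closed one mult[symmetric])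
  qed (auto simp: semidirect_prod_def closed aut_action_one[OF assms(2) action])
qed

definition swap_action :: "int \<Rightarrow> 'a \<times> 'a \<Rightarrow> 'a \<times> 'a" where
  "swap_action b x = (if b = 0 then x else prod.swap x)"

lemma swap_action_iso: "swap_action b \<in> iso (G \<times>\<times> G) (G \<times>\<times> G)"
proof (rule isoI)
  show "swap_action b \<in> hom (G \<times>\<times> G) (G \<times>\<times> G)"
    by (auto simp: hom_def swap_action_def)
  show "bij_betw (swap_action b) (carrier (G \<times>\<times> G)) (carrier (G \<times>\<times> G))"
    by (rule bij_betwI[where g = "swap_action b"]) (auto simp: swap_action_def)
qed

lemma aut_action_swap: "aut_action (G \<times>\<times> G) (integer_mod_group 2) swap_action"
  unfolding aut_action_def
proof (intro conjI ballI swap_action_iso)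
  fix b c x assume "b \<in> carrier (integer_mod_group 2)" "c \<in> carrier (integer_mod_group 2)"
  then have "b \<in> {0, 1}" "c \<in> {0, 1}"
    by (auto simp: carrier_integer_mod_group)
  then show "swap_action (b \<otimes>\<^bsub>integer_mod_group 2\<^esub> c) x = swap_action b (swap_action c x)"
    by (auto simp: swap_action_def)
qed

definition crown_succ :: "nat \<Rightarrow> nat \<Rightarrow> nat" where
  "crown_succ n i = (if i = n then 1 else Suc i)"

text \<open>\<open>crown_edge n True i\<close> is the edge \<open>x\<^sub>i < y\<^sub>i\<close> and \<open>crown_edge n False i\<close> the edge
  \<open>x\<^sub>i\<^sub>+\<^sub>1 < y\<^sub>i\<close> (indices modulo \<open>n\<close>); we call them straight and skew.\<close>
definition crown_edge :: "nat \<Rightarrow> bool \<Rightarrow> nat \<Rightarrow> (nat \<times> bool) \<times> (nat \<times> bool)" where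
  "crown_edge n straight i = ((if straight then i else crown_succ n i, False), (i, True))"

definition is_straight :: "(nat \<times> bool) \<times> (nat \<times> bool) \<Rightarrow> bool" where
  "is_straight e \<longleftrightarrow> fst (fst e) = fst (snd e)"

abbreviation crown_basis :: "nat \<Rightarrow> ((nat \<times> bool) \<times> (nat \<times> bool)) set" where
  "crown_basis n \<equiv> basisB (crown_carrier n) (crown_le n)"

abbreviation crown_AM :: "nat \<Rightarrow> ((nat \<times> bool) \<times> (nat \<times> bool) \<Rightarrow> (nat \<times> bool) \<times> (nat \<times> bool)) monoid"
  where "crown_AM n \<equiv> AM_group (crown_carrier n) (crown_le n)"

lemma mem_crown_carrier [simp]: "(i, b) \<in> crown_carrier n \<longleftrightarrow> i \<in> {1..n}"
  by (simp add: crown_carrier_def)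

lemma crown_succ_in: "i \<in> {1..n} \<Longrightarrow> crown_succ n i \<in> {1..n}"
  by (auto simp: crown_succ_def)

lemma crown_succ_eq_iff: "i \<in> {1..n} \<Longrightarrow> j \<in> {1..n} \<Longrightarrow> crown_succ n i = crown_succ n j \<longleftrightarrow> i = j"
  by (auto simp: crown_succ_def)

lemma crown_succ_surj:
  assumes "j \<in> {1..n}"
  shows "\<exists>i\<in>{1..n}. j = crown_succ n i"
proof (cases "j = 1")
  case True
  with assms show ?thesis by (intro bexI[of _ n]) (auto simp: crown_succ_def)
next
  case False
  with assms show ?thesis by (intro bexI[of _ "j - 1"]) (auto simp: crown_succ_def)
qed

lemma plt_crown_le:
  "plt (crown_le n) a b \<longleftrightarrow> a \<in> crown_carrier n \<and> b \<in> crown_carrier n \<and> \<not> snd a \<and> snd b \<and>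
     (fst a = fst b \<or> fst a = fst b + 1 \<or> (fst a = 1 \<and> fst b = n))"
  unfolding plt_def crown_le_def by auto

lemma antisymp_crown_le: "antisymp (crown_le n)"
  by (auto intro: antisympI simp: crown_le_def)

lemma crown_basis_eq: "crown_basis n = {crown_edge n k i | k i. i \<in> {1..n}}"
proof (intro equalityI subsetI)
  fix e assume "e \<in> crown_basis n"
  then obtain i j where "e = ((i, False), (j, True))" and j: "j \<in> {1..n}"
    and "i \<in> {1..n}" "i = j \<or> i = j + 1 \<or> (i = 1 \<and> j = n)"
    by (auto simp: basisB_def plt_crown_le)
  then have "e = crown_edge n (i = j) j"
    by (auto simp: crown_edge_def crown_succ_def)
  with j show "e \<in> {crown_edge n k i | k i. i \<in> {1..n}}" by blast
next
  fix e assume "e \<in> {crown_edge n k i | k i. i \<in> {1..n}}"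
  then show "e \<in> crown_basis n"
    unfolding crown_edge_def crown_succ_def by (auto simp: basisB_def plt_crown_le split: if_splits)
qed

lemma crown_edge_in_basis: "i \<in> {1..n} \<Longrightarrow> crown_edge n k i \<in> crown_basis n"
  unfolding crown_basis_eq by blast

lemma crown_basisE:
  assumes "e \<in> crown_basis n"
  obtains k i where "i \<in> {1..n}" "e = crown_edge n k i"
  using assms unfolding crown_basis_eq by blast

lemma crown_edge_eq_iff:
  assumes "2 \<le> n" "i \<in> {1..n}" "j \<in> {1..n}"
  shows "crown_edge n k i = crown_edge n l j \<longleftrightarrow> k = l \<and> i = j"
  using assms by (auto simp: crown_edge_def crown_succ_def)

lemma crown_edge_inject [simp]: "crown_edge n k i = crown_edge n k j \<longleftrightarrow> i = j"
  by (auto simp: crown_edge_def)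

lemma is_straight_crown_edge: "2 \<le> n \<Longrightarrow> i \<in> {1..n} \<Longrightarrow> is_straight (crown_edge n k i) \<longleftrightarrow> k"
  by (auto simp: is_straight_def crown_edge_def crown_succ_def)

lemma index_crown_edge [simp]: "fst (snd (crown_edge n k i)) = i"
  by (simp add: crown_edge_def)

lemma crown_edges_above_top: "edges_above (crown_carrier n) (crown_le n) (i, True) = {}"
  by (auto simp: edges_above_def basisB_def plt_crown_le)

lemma crown_edges_below_bottom: "edges_below (crown_carrier n) (crown_le n) (i, False) = {}"
  by (auto simp: edges_below_def basisB_def plt_crown_le)

lemma crown_edges_below_top:
  "i \<in> {1..n} \<Longrightarrow> edges_below (crown_carrier n) (crown_le n) (i, True)
     = {crown_edge n True i, crown_edge n False i}"
  unfolding edges_below_def crown_basis_eq by (auto simp: crown_edge_def)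

lemma crown_edges_above_bottom:
  assumes "i \<in> {1..n}"
  shows "edges_above (crown_carrier n) (crown_le n) (crown_succ n i, False)
           = {crown_edge n True (crown_succ n i), crown_edge n False i}"
proof (intro equalityI subsetI)
  fix e assume e: "e \<in> edges_above (crown_carrier n) (crown_le n) (crown_succ n i, False)"
  then obtain k j where "j \<in> {1..n}" "e = crown_edge n k j"
    by (auto simp: edges_above_def elim: crown_basisE)
  with e assms show "e \<in> {crown_edge n True (crown_succ n i), crown_edge n False i}"
    by (cases k) (auto simp: edges_above_def crown_edge_def crown_succ_eq_iff)
next
  fix e assume "e \<in> {crown_edge n True (crown_succ n i), crown_edge n False i}"
  moreover have "crown_edge n True (crown_succ n i) \<in> crown_basis n"
    and "crown_edge n False i \<in> crown_basis n"
    using assms by (blast intro: crown_edge_in_basis crown_succ_in)+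
  ultimately show "e \<in> edges_above (crown_carrier n) (crown_le n) (crown_succ n i, False)"
    by (auto simp: edges_above_def crown_edge_def)
qed

lemma crown_vertexE:
  assumes "z \<in> crown_carrier n"
  obtains i where "i \<in> {1..n}" "z = (i, True)" | i where "i \<in> {1..n}" "z = (crown_succ n i, False)"
proof -
  obtain j b where z: "z = (j, b)" "j \<in> {1..n}"
    using assms by (cases z) auto
  show thesis
  proof (cases b)
    case True
    with z that(1) show ?thesis by simp
  next
    case False
    from crown_succ_surj[OF z(2)] obtain i where "i \<in> {1..n}" "j = crown_succ n i" by blast
    with z False that(2) show ?thesis by simp
  qed
qed

lemma crown_max_chain_list_iff:
  assumes "1 \<le> n"
  shows "max_chain_list (crown_carrier n) (crown_le n) us
           \<longleftrightarrow> (\<exists>a b. us = [a, b] \<and> (a, b) \<in> crown_basis n)"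
proof (rule max_chain_list_of_height_one)
  show "\<exists>b\<in>crown_carrier n. plt (crown_le n) a b \<or> plt (crown_le n) b a"
    if "a \<in> crown_carrier n" for a
    using that by (intro bexI[of _ "(fst a, \<not> snd a)"]) (auto simp: plt_crown_le crown_carrier_def)
  show "crown_carrier n \<noteq> {}"
    using assms by (auto simp: crown_carrier_def)
qed (auto simp: crown_le_def plt_crown_le)

section \<open>Admissible maps of the crown\<close>

lemma zigzag_determined:
  fixes g :: "bool \<Rightarrow> nat \<Rightarrow> 'a"
  assumes "inj h"
    and straight_skew: "\<And>i. i \<in> {1..n} \<Longrightarrow> g False i = h (g True i)"
    and skew_straight: "\<And>i. 1 \<le> i \<Longrightarrow> i < n \<Longrightarrow> g False i = h (g True (Suc i))"
    and "i \<in> {1..n}"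
  shows "g k i = (if k then g True 1 else h (g True 1))"
proof -
  have "i \<le> n \<longrightarrow> g True i = g True 1" if "1 \<le> i" for i
    using that
  proof (induction i rule: nat_induct_at_least)
    case (Suc j)
    show ?case
    proof
      assume "Suc j \<le> n"
      then have "j \<in> {1..n}" "j < n" using Suc.hyps by simp_all
      have "h (g True (Suc j)) = g False j"
        using skew_straight[OF Suc.hyps \<open>j < n\<close>] by simp
      also have "\<dots> = h (g True j)"
        using straight_skew[OF \<open>j \<in> {1..n}\<close>] .
      finally have "g True (Suc j) = g True j"
        using \<open>inj h\<close> by (simp add: inj_eq)
      with Suc.IH \<open>j < n\<close> show "g True (Suc j) = g True 1" by simp
    qed
  qed simp
  from this[of i] \<open>i \<in> {1..n}\<close> have "g True i = g True 1" by simp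
  with straight_skew[OF \<open>i \<in> {1..n}\<close>] show ?thesis by simp
qed

lemma crown_net_flow_basis:
  assumes "2 \<le> n" "is_closed_walk (crown_carrier n) (crown_le n) us" "e \<in> crown_basis n"
  shows "net_flow {e} us = (if is_straight e then 1 else -1) * net_flow {crown_edge n True 1} us"
proof -
  let ?flow = "\<lambda>k i. net_flow {crown_edge n k i} us"
  have conservation: "net_flow (edges_above (crown_carrier n) (crown_le n) z) us
      = net_flow (edges_below (crown_carrier n) (crown_le n) z) us" for z
    using closed_walk_net_flow_conservation[OF antisymp_crown_le assms(2)] .
  have pair: "net_flow {crown_edge n True j, crown_edge n False i} us
      = ?flow True j + ?flow False i"
    if "i \<in> {1..n}" "j \<in> {1..n}" for i j
    using that assms(1) by (intro net_flow_pair) (simp add: crown_edge_eq_iff)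
  have at_top: "?flow False i = - ?flow True i" if "i \<in> {1..n}" for i
    using conservation[of "(i, True)"] pair[of i i] that
    by (simp add: crown_edges_above_top crown_edges_below_top)
  have at_bottom: "?flow False i = - ?flow True (Suc i)" if "1 \<le> i" "i < n" for i
  proof -
    have "net_flow {crown_edge n True (crown_succ n i), crown_edge n False i} us = 0"
      using conservation[of "(crown_succ n i, False)"] that
      by (simp add: crown_edges_above_bottom crown_edges_below_bottom)
    moreover have "crown_succ n i = Suc i"
      using that by (simp add: crown_succ_def)
    ultimately show ?thesis
      using pair[of i "Suc i"] that by simp
  qed
  obtain k i where i: "i \<in> {1..n}" and e: "e = crown_edge n k i"
    using assms(3) by (rule crown_basisE)
  have "?flow k i = (if k then ?flow True 1 else - ?flow True 1)"
    by (rule zigzag_determined[where h = uminus and g = ?flow, OF _ at_top at_bottom i])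
      (simp add: inj_def)
  with i e assms(1) show ?thesis
    by (simp add: is_straight_crown_edge)
qed

text \<open>The closed walk \<open>x\<^sub>1, y\<^sub>1, x\<^sub>2, y\<^sub>2, \<dots>, x\<^sub>n, y\<^sub>n, x\<^sub>1\<close> once around the crown.\<close>
definition crown_cycle :: "nat \<Rightarrow> (nat \<times> bool) list" where
  "crown_cycle n = map (\<lambda>k. (k div 2 mod n + 1, odd k)) [0..<2 * n + 1]"

lemma crown_cycle_nth:
  assumes "j < n"
  shows "crown_cycle n ! (2 * j) = (Suc j, False)"
    and "crown_cycle n ! (2 * j + 1) = (Suc j, True)"
    and "crown_cycle n ! (2 * j + 2) = (crown_succ n (Suc j), False)"
  using assms unfolding crown_cycle_def
  by (simp_all del: upt_Suc add: nth_map_upt crown_succ_def)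

lemma covers_crown_le: "covers (crown_carrier n) (crown_le n) a b \<longleftrightarrow> plt (crown_le n) b a"
  unfolding covers_def by (auto simp: plt_crown_le)

lemma crown_cycle_step:
  assumes "k < 2 * n"
  shows "plt (crown_le n) (crown_cycle n ! (k + 1)) (crown_cycle n ! k)
           \<or> plt (crown_le n) (crown_cycle n ! k) (crown_cycle n ! (k + 1))"
proof (cases "even k")
  case True
  then obtain j where j: "k = 2 * j" "j < n" using assms by (auto elim: evenE)
  have "plt (crown_le n) (Suc j, False) (Suc j, True)"
    using j(2) by (simp add: plt_crown_le)
  with crown_cycle_nth(1,2)[OF j(2)] show ?thesis unfolding j(1) by simp
next
  case False
  then obtain j where j: "k = 2 * j + 1" "j < n" using assms by (auto elim: oddE)
  have "plt (crown_le n) (crown_succ n (Suc j), False) (Suc j, True)"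
    using j(2) crown_succ_in[of "Suc j" n] by (simp add: plt_crown_le crown_succ_def)
  moreover have "2 * j + 1 + 1 = 2 * j + 2" by simp
  ultimately show ?thesis using crown_cycle_nth(2,3)[OF j(2)] unfolding j(1) by metis
qed

lemma crown_cycle_closed_walk:
  assumes "2 \<le> n"
  shows "is_closed_walk (crown_carrier n) (crown_le n) (crown_cycle n)"
proof -
  have length: "length (crown_cycle n) = 2 * n + 1"
    by (simp add: crown_cycle_def)
  show ?thesis
    unfolding is_closed_walk_def is_walk_def covers_crown_le
  proof (intro conjI allI impI)
    show "crown_cycle n \<noteq> []"
      using length by auto
    show "set (crown_cycle n) \<subseteq> crown_carrier n"
      using assms by (auto simp: crown_cycle_def)
    show "hd (crown_cycle n) = last (crown_cycle n)"
      using assms by (simp add: crown_cycle_def hd_map last_map)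
    show "plt (crown_le n) (crown_cycle n ! (i + 1)) (crown_cycle n ! i)
        \<or> plt (crown_le n) (crown_cycle n ! i) (crown_cycle n ! (i + 1))"
      if "i + 1 < length (crown_cycle n)" for i
      by (rule crown_cycle_step) (use that length in simp)
  qed
qed

lemma net_flow_crown_cycle:
  assumes "2 \<le> n"
  shows "net_flow {crown_edge n True 1} (crown_cycle n) = 1"
proof -
  let ?v = "\<lambda>k. crown_cycle n ! k"
  have "of_bool ((?v k, ?v (Suc k)) \<in> {crown_edge n True 1})
      - of_bool ((?v (Suc k), ?v k) \<in> {crown_edge n True 1}) = (of_bool (k = 0) :: int)"
    if k: "k < 2 * n" for k
  proof (cases "even k")
    case True
    then obtain j where "k = 2 * j" "j < n" using k by (auto elim: evenE)
    then show ?thesis using crown_cycle_nth[of j n] by (simp add: crown_edge_def)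
  next
    case False
    then obtain j where "k = 2 * j + 1" "j < n" using k by (auto elim: oddE)
    then show ?thesis
      using crown_cycle_nth[of j n] assms by (simp add: crown_edge_def crown_succ_def)
  qed
  then have "net_flow {crown_edge n True 1} (crown_cycle n) = (\<Sum>k<2 * n. of_bool (k = 0))"
    unfolding net_flow_def by (intro sum.cong) (simp_all add: crown_cycle_def)
  also have "\<dots> = 1"
    using assms by (simp add: sum.If_cases)
  finally show ?thesis .
qed

lemma crown_admissible_iff_pairs:
  assumes "\<theta> ` crown_basis n \<subseteq> crown_basis n"
  shows "admissible (crown_carrier n) (crown_le n) \<theta> \<longleftrightarrow>
    (\<forall>us. is_closed_walk (crown_carrier n) (crown_le n) us \<longrightarrow> (\<forall>i\<in>{1..n}.
       net_flow (\<theta> ` {crown_edge n True i, crown_edge n False i}) us = 0 \<and>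
       net_flow (\<theta> ` {crown_edge n True (crown_succ n i), crown_edge n False i}) us = 0))"
proof -
  let ?above = "edges_above (crown_carrier n) (crown_le n)"
  let ?below = "edges_below (crown_carrier n) (crown_le n)"
  have top: "net_flow (\<theta> ` ?above (i, True)) us = net_flow (\<theta> ` ?below (i, True)) us
      \<longleftrightarrow> net_flow (\<theta> ` {crown_edge n True i, crown_edge n False i}) us = 0"
    if "i \<in> {1..n}" for i us
    using that by (auto simp: crown_edges_above_top crown_edges_below_top)
  have bottom: "net_flow (\<theta> ` ?above (crown_succ n i, False)) us
        = net_flow (\<theta> ` ?below (crown_succ n i, False)) us
      \<longleftrightarrow> net_flow (\<theta> ` {crown_edge n True (crown_succ n i), crown_edge n False i}) us = 0"
    if "i \<in> {1..n}" for i us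
    using that by (simp add: crown_edges_above_bottom crown_edges_below_bottom)
  have "(\<forall>z\<in>crown_carrier n. net_flow (\<theta> ` ?above z) us = net_flow (\<theta> ` ?below z) us)
      \<longleftrightarrow> (\<forall>i\<in>{1..n}. net_flow (\<theta> ` {crown_edge n True i, crown_edge n False i}) us = 0 \<and>
          net_flow (\<theta> ` {crown_edge n True (crown_succ n i), crown_edge n False i}) us = 0)" for us
  proof
    assume "\<forall>z\<in>crown_carrier n. net_flow (\<theta> ` ?above z) us = net_flow (\<theta> ` ?below z) us"
    with top bottom crown_succ_in
    show "\<forall>i\<in>{1..n}. net_flow (\<theta> ` {crown_edge n True i, crown_edge n False i}) us = 0 \<and>
        net_flow (\<theta> ` {crown_edge n True (crown_succ n i), crown_edge n False i}) us = 0"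
      by (metis mem_crown_carrier)
  next
    assume pairs: "\<forall>i\<in>{1..n}. net_flow (\<theta> ` {crown_edge n True i, crown_edge n False i}) us = 0 \<and>
          net_flow (\<theta> ` {crown_edge n True (crown_succ n i), crown_edge n False i}) us = 0"
    show "\<forall>z\<in>crown_carrier n. net_flow (\<theta> ` ?above z) us = net_flow (\<theta> ` ?below z) us"
    proof
      fix z assume "z \<in> crown_carrier n"
      then show "net_flow (\<theta> ` ?above z) us = net_flow (\<theta> ` ?below z) us"
        by (cases rule: crown_vertexE) (use pairs top bottom in blast)+
    qed
  qed
  then show ?thesis
    unfolding admissible_iff_net_flow[OF assms] by simp
qed

lemma crown_net_flow_image_pair:
  assumes "2 \<le> n" "bij_betw \<theta> (crown_basis n) (crown_basis n)"
    and "is_closed_walk (crown_carrier n) (crown_le n) us" "i \<in> {1..n}" "j \<in> {1..n}"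
  shows "net_flow (\<theta> ` {crown_edge n True j, crown_edge n False i}) us
    = ((if is_straight (\<theta> (crown_edge n True j)) then 1 else -1)
        + (if is_straight (\<theta> (crown_edge n False i)) then 1 else -1))
      * net_flow {crown_edge n True 1} us"
proof -
  have in_basis: "crown_edge n True j \<in> crown_basis n" "crown_edge n False i \<in> crown_basis n"
    using assms(4,5) by (simp_all add: crown_edge_in_basis)
  moreover have "crown_edge n True j \<noteq> crown_edge n False i"
    using assms(1,4,5) by (simp add: crown_edge_eq_iff)
  ultimately have "\<theta> (crown_edge n True j) \<noteq> \<theta> (crown_edge n False i)"
    using assms(2) by (metis bij_betw_def inj_on_eq_iff)
  moreover have "\<theta> (crown_edge n True j) \<in> crown_basis n" "\<theta> (crown_edge n False i) \<in> crown_basis n"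
    using in_basis assms(2) by (simp_all add: bij_betw_apply)
  ultimately show ?thesis
    using assms(1,3) by (simp add: net_flow_pair crown_net_flow_basis algebra_simps)
qed

lemma crown_net_flow_image_pair_eq_0_iff:
  assumes "2 \<le> n" "bij_betw \<theta> (crown_basis n) (crown_basis n)" "i \<in> {1..n}" "j \<in> {1..n}"
  shows "(\<forall>us. is_closed_walk (crown_carrier n) (crown_le n) us \<longrightarrow>
            net_flow (\<theta> ` {crown_edge n True j, crown_edge n False i}) us = 0)
         \<longleftrightarrow> is_straight (\<theta> (crown_edge n True j)) \<noteq> is_straight (\<theta> (crown_edge n False i))"
proof
  note cycle = crown_cycle_closed_walk[OF assms(1)]
  assume "\<forall>us. is_closed_walk (crown_carrier n) (crown_le n) us \<longrightarrow>
      net_flow (\<theta> ` {crown_edge n True j, crown_edge n False i}) us = 0"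
  with cycle crown_net_flow_image_pair[OF assms(1,2) cycle assms(3,4)]
    net_flow_crown_cycle[OF assms(1)]
  show "is_straight (\<theta> (crown_edge n True j)) \<noteq> is_straight (\<theta> (crown_edge n False i))"
    by (simp split: if_splits)
next
  assume "is_straight (\<theta> (crown_edge n True j)) \<noteq> is_straight (\<theta> (crown_edge n False i))"
  with crown_net_flow_image_pair[OF assms(1,2) _ assms(3,4)]
  show "\<forall>us. is_closed_walk (crown_carrier n) (crown_le n) us \<longrightarrow>
      net_flow (\<theta> ` {crown_edge n True j, crown_edge n False i}) us = 0"
    by auto
qed

lemma crown_admissible_iff_alternating:
  assumes "2 \<le> n" "bij_betw \<theta> (crown_basis n) (crown_basis n)"
  shows "admissible (crown_carrier n) (crown_le n) \<theta> \<longleftrightarrow> (\<forall>i\<in>{1..n}.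
           is_straight (\<theta> (crown_edge n True i))
             \<noteq> is_straight (\<theta> (crown_edge n False i)) \<and>
           is_straight (\<theta> (crown_edge n True (crown_succ n i)))
             \<noteq> is_straight (\<theta> (crown_edge n False i)))"
proof -
  have maps: "\<theta> ` crown_basis n \<subseteq> crown_basis n"
    using assms(2) by (simp add: bij_betw_def)
  have "admissible (crown_carrier n) (crown_le n) \<theta> \<longleftrightarrow> (\<forall>i\<in>{1..n}.
      (\<forall>us. is_closed_walk (crown_carrier n) (crown_le n) us \<longrightarrow>
         net_flow (\<theta> ` {crown_edge n True i, crown_edge n False i}) us = 0) \<and>
      (\<forall>us. is_closed_walk (crown_carrier n) (crown_le n) us \<longrightarrow>
         net_flow (\<theta> ` {crown_edge n True (crown_succ n i), crown_edge n False i}) us = 0))"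
    unfolding crown_admissible_iff_pairs[OF maps] by blast
  also have "\<dots> \<longleftrightarrow> (\<forall>i\<in>{1..n}.
           is_straight (\<theta> (crown_edge n True i))
             \<noteq> is_straight (\<theta> (crown_edge n False i)) \<and>
           is_straight (\<theta> (crown_edge n True (crown_succ n i)))
             \<noteq> is_straight (\<theta> (crown_edge n False i)))"
    by (rule ball_cong[OF refl])
      (simp only: crown_net_flow_image_pair_eq_0_iff[OF assms] crown_succ_in)
  finally show ?thesis .
qed

lemma crown_admissible_iff:
  assumes "2 \<le> n" "bij_betw \<theta> (crown_basis n) (crown_basis n)"
  shows "admissible (crown_carrier n) (crown_le n) \<theta>
           \<longleftrightarrow> (\<exists>c. \<forall>k. \<forall>i\<in>{1..n}. is_straight (\<theta> (crown_edge n k i)) = (k = c))"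
proof -
  let ?T = "\<lambda>k i. is_straight (\<theta> (crown_edge n k i))"
  have "(\<forall>i\<in>{1..n}. ?T True i \<noteq> ?T False i \<and> ?T True (crown_succ n i) \<noteq> ?T False i)
      \<longleftrightarrow> (\<exists>c. \<forall>k. \<forall>i\<in>{1..n}. ?T k i = (k = c))"
  proof
    assume alternating: "\<forall>i\<in>{1..n}. ?T True i \<noteq> ?T False i \<and> ?T True (crown_succ n i) \<noteq> ?T False i"
    have determined: "?T k i = (if k then ?T True 1 else \<not> ?T True 1)" if "i \<in> {1..n}" for k i
    proof (rule zigzag_determined[where h = Not and g = ?T, OF _ _ _ that])
      show "?T False j = (\<not> ?T True j)" if "j \<in> {1..n}" for j
        using alternating that by blast
      show "?T False j = (\<not> ?T True (Suc j))" if "1 \<le> j" "j < n" for j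
      proof -
        have "?T True (crown_succ n j) \<noteq> ?T False j"
          using alternating that by simp
        moreover have "crown_succ n j = Suc j"
          using that by (simp add: crown_succ_def)
        ultimately show ?thesis by simp
      qed
    qed (simp add: inj_def)
    show "\<exists>c. \<forall>k. \<forall>i\<in>{1..n}. ?T k i = (k = c)"
    proof (intro exI[of _ "?T True 1"] allI ballI)
      fix k i assume "i \<in> {1..n}"
      from determined[OF this, of k] show "?T k i = (k = ?T True 1)"
        by (cases k) simp_all
    qed
  next
    assume "\<exists>c. \<forall>k. \<forall>i\<in>{1..n}. ?T k i = (k = c)"
    then obtain c where "\<forall>k. \<forall>i\<in>{1..n}. ?T k i = (k = c)" ..
    with crown_succ_in
    show "\<forall>i\<in>{1..n}. ?T True i \<noteq> ?T False i \<and> ?T True (crown_succ n i) \<noteq> ?T False i"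
      by simp
  qed
  with crown_admissible_iff_alternating[OF assms] show ?thesis by simp
qed

lemma carrier_AM_crown:
  assumes "2 \<le> n"
  shows "\<theta> \<in> carrier (crown_AM n) \<longleftrightarrow>
    \<theta> \<in> extensional (crown_basis n) \<and> bij_betw \<theta> (crown_basis n) (crown_basis n) \<and>
    (\<exists>c. \<forall>k. \<forall>i\<in>{1..n}. is_straight (\<theta> (crown_edge n k i)) = (k = c))"
proof -
  have "in_M (crown_carrier n) (crown_le n) \<theta> \<longleftrightarrow> bij_betw \<theta> (crown_basis n) (crown_basis n)"
    using assms by (intro in_M_iff_bij_betw crown_max_chain_list_iff) simp
  with crown_admissible_iff[OF assms] show ?thesis
    unfolding AM_group_def by auto
qed

section \<open>The isomorphism with the semidirect product\<close>

abbreviation sym_wreath :: "nat \<Rightarrow> (((nat \<Rightarrow> nat) \<times> (nat \<Rightarrow> nat)) \<times> int) monoid" where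
  "sym_wreath n \<equiv> semidirect_prod (sym_group n \<times>\<times> sym_group n) (integer_mod_group 2) swap_action"

lemma carrier_sym_wreath:
  "carrier (sym_wreath n) = ({p. p permutes {1..n}} \<times> {p. p permutes {1..n}}) \<times> {0, 1}"
  by (auto simp: semidirect_prod_def sym_group_carrier carrier_integer_mod_group)

lemma mult_sym_wreath:
  "((s, t), b) \<otimes>\<^bsub>sym_wreath n\<^esub> ((s', t'), b')
     = (if b = 0 then (s \<circ> s', t \<circ> t') else (s \<circ> t', t \<circ> s'), (b + b') mod 2)"
  by (simp add: semidirect_prod_def swap_action_def sym_group_mult)

lemma group_sym_wreath: "group (sym_wreath n)"
  by (intro semidirect_prod_group DirProd_group sym_group_is_group group_integer_mod_group
      aut_action_swap)

text \<open>The image of an edge with index \<open>i\<close> has index \<open>s i\<close> if it is straight and \<open>t i\<close> if it is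
  skew; it is of the same kind as the edge iff \<open>b = 0\<close>.\<close>
definition crown_auto :: "nat \<Rightarrow> ((nat \<Rightarrow> nat) \<times> (nat \<Rightarrow> nat)) \<times> int
    \<Rightarrow> (nat \<times> bool) \<times> (nat \<times> bool) \<Rightarrow> (nat \<times> bool) \<times> (nat \<times> bool)" where
  "crown_auto n = (\<lambda>((s, t), b). restrict (\<lambda>e.
     let k = (is_straight e = (b = 0)) in crown_edge n k ((if k then s else t) (fst (snd e))))
     (crown_basis n))"

lemma crown_auto_extensional: "crown_auto n x \<in> extensional (crown_basis n)"
  by (simp add: crown_auto_def split: prod.split)

lemma crown_auto_edge:
  assumes "2 \<le> n" "i \<in> {1..n}"
  shows "crown_auto n ((s, t), b) (crown_edge n k i)
           = crown_edge n (k = (b = 0)) ((if k = (b = 0) then s else t) i)"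
  using assms by (simp add: crown_auto_def crown_edge_in_basis is_straight_crown_edge Let_def)

lemma finite_crown_basis: "finite (crown_basis n)"
proof (rule finite_subset)
  show "crown_basis n \<subseteq> ({1..n} \<times> UNIV) \<times> ({1..n} \<times> UNIV)"
    by (auto simp: basisB_def plt_crown_le)
qed simp

lemma crown_auto_edge_index:
  assumes "s permutes {1..n}" "t permutes {1..n}" "i \<in> {1..n}"
  shows "(if k then s else t) i \<in> {1..n}"
  using permutes_in_image[OF assms(1), of i] permutes_in_image[OF assms(2), of i] assms(3) by simp

lemma crown_auto_inj_on:
  assumes "2 \<le> n" "s permutes {1..n}" "t permutes {1..n}"
  shows "inj_on (crown_auto n ((s, t), b)) (crown_basis n)"
proof (rule inj_onI)
  note index = crown_auto_edge_index[OF assms(2,3)]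
  fix e e' assume e: "e \<in> crown_basis n" and e': "e' \<in> crown_basis n"
    and eq: "crown_auto n ((s, t), b) e = crown_auto n ((s, t), b) e'"
  obtain k i where i: "i \<in> {1..n}" and e_def: "e = crown_edge n k i"
    using e by (rule crown_basisE)
  obtain l j where j: "j \<in> {1..n}" and e'_def: "e' = crown_edge n l j"
    using e' by (rule crown_basisE)
  from eq have "crown_edge n (k = (b = 0)) ((if k = (b = 0) then s else t) i)
      = crown_edge n (l = (b = 0)) ((if l = (b = 0) then s else t) j)"
    unfolding e_def e'_def crown_auto_edge[OF assms(1) i] crown_auto_edge[OF assms(1) j] .
  then have kind: "(k = (b = 0)) = (l = (b = 0))"
    and index_eq: "(if k = (b = 0) then s else t) i = (if l = (b = 0) then s else t) j"
    unfolding crown_edge_eq_iff[OF assms(1) index[OF i] index[OF j]] by blast+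
  from kind have "k = l" by auto
  moreover have "i = j"
  proof (cases "l = (b = 0)")
    case True
    with index_eq \<open>k = l\<close> have "s i = s j" by simp
    from inj_onD[OF permutes_inj_on[OF assms(2)] this i j] show ?thesis .
  next
    case False
    with index_eq \<open>k = l\<close> have "t i = t j" by simp
    from inj_onD[OF permutes_inj_on[OF assms(3)] this i j] show ?thesis .
  qed
  ultimately show "e = e'"
    unfolding e_def e'_def by simp
qed

lemma crown_auto_bij_betw:
  assumes "2 \<le> n" "s permutes {1..n}" "t permutes {1..n}"
  shows "bij_betw (crown_auto n ((s, t), b)) (crown_basis n) (crown_basis n)"
proof -
  have "crown_auto n ((s, t), b) e \<in> crown_basis n" if "e \<in> crown_basis n" for e
    using that
  proof (rule crown_basisE)
    fix k i assume i: "i \<in> {1..n}" and e: "e = crown_edge n k i"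
    show ?thesis
      unfolding e crown_auto_edge[OF assms(1) i]
      by (rule crown_edge_in_basis[OF crown_auto_edge_index[OF assms(2,3) i]])
  qed
  with crown_auto_inj_on[OF assms] show ?thesis
    by (simp add: bij_betw_def endo_inj_surj finite_crown_basis image_subset_iff)
qed

lemma is_straight_crown_auto:
  assumes "2 \<le> n" "s permutes {1..n}" "t permutes {1..n}" "i \<in> {1..n}"
  shows "is_straight (crown_auto n ((s, t), b) (crown_edge n k i)) \<longleftrightarrow> k = (b = 0)"
  using assms crown_auto_edge_index[OF assms(2-4)]
  by (simp add: crown_auto_edge is_straight_crown_edge)

lemma crown_auto_in_carrier:
  assumes "2 \<le> n" "s permutes {1..n}" "t permutes {1..n}"
  shows "crown_auto n ((s, t), b) \<in> carrier (crown_AM n)"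
  unfolding carrier_AM_crown[OF assms(1)]
  using crown_auto_extensional crown_auto_bij_betw[OF assms] is_straight_crown_auto[OF assms]
  by auto

lemma crown_auto_mult:
  assumes "2 \<le> n" "((s, t), b) \<in> carrier (sym_wreath n)" "((s', t'), b') \<in> carrier (sym_wreath n)"
  shows "crown_auto n (((s, t), b) \<otimes>\<^bsub>sym_wreath n\<^esub> ((s', t'), b'))
           = crown_auto n ((s, t), b) \<otimes>\<^bsub>crown_AM n\<^esub> crown_auto n ((s', t'), b')"
proof (rule extensionalityI)
  show "crown_auto n (((s, t), b) \<otimes>\<^bsub>sym_wreath n\<^esub> ((s', t'), b')) \<in> extensional (crown_basis n)"
    by (rule crown_auto_extensional)
  show "crown_auto n ((s, t), b) \<otimes>\<^bsub>crown_AM n\<^esub> crown_auto n ((s', t'), b')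
      \<in> extensional (crown_basis n)"
    by (simp add: AM_group_def)
next
  fix e assume "e \<in> crown_basis n"
  then obtain k i where i: "i \<in> {1..n}" and e: "e = crown_edge n k i"
    by (rule crown_basisE)
  from assms(2,3) have b: "b \<in> {0, 1}" "b' \<in> {0, 1}" and "s' permutes {1..n}" "t' permutes {1..n}"
    by (simp_all add: carrier_sym_wreath)
  with assms(1) i crown_auto_edge_index[of s' n t' i]
  show "crown_auto n (((s, t), b) \<otimes>\<^bsub>sym_wreath n\<^esub> ((s', t'), b')) e
      = (crown_auto n ((s, t), b) \<otimes>\<^bsub>crown_AM n\<^esub> crown_auto n ((s', t'), b')) e"
    unfolding e
    by (cases k) (auto simp: mult_sym_wreath AM_group_def crown_auto_edge crown_edge_in_basis)
qed

lemma crown_auto_eqD: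
  assumes "2 \<le> n" "((s, t), b) \<in> carrier (sym_wreath n)" "((s', t'), b') \<in> carrier (sym_wreath n)"
    and eq: "crown_auto n ((s, t), b) = crown_auto n ((s', t'), b')"
  shows "((s, t), b) = ((s', t'), b')"
proof -
  from assms(2,3) have perms: "s permutes {1..n}" "t permutes {1..n}"
      "s' permutes {1..n}" "t' permutes {1..n}"
    and b: "b \<in> {0, 1}" "b' \<in> {0, 1}"
    by (simp_all add: carrier_sym_wreath)
  have edge_eq: "crown_edge n (k = (b = 0)) ((if k = (b = 0) then s else t) i)
      = crown_edge n (k = (b' = 0)) ((if k = (b' = 0) then s' else t') i)" if "i \<in> {1..n}" for k i
    using eq assms(1) that crown_auto_edge by metis
  have "1 \<in> {1..n}" using assms(1) by simp
  with assms(1) perms have "(b = 0) = (b' = 0)"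
    using is_straight_crown_auto[of n s t 1 b True] is_straight_crown_auto[of n s' t' 1 b' True] eq
    by simp
  with b have "b = b'" by auto
  have "s i = s' i \<and> t i = t' i" for i
  proof (cases "i \<in> {1..n}")
    case True
    from edge_eq[OF True, of "b = 0"] edge_eq[OF True, of "b \<noteq> 0"] \<open>b = b'\<close>
    show ?thesis by simp
  next
    case False
    with perms show ?thesis by (simp add: permutes_not_in)
  qed
  with \<open>b = b'\<close> show ?thesis by (simp add: fun_eq_iff)
qed

lemma AM_crown_edge_image:
  assumes "2 \<le> n" "\<theta> \<in> carrier (crown_AM n)"
    and kinds: "\<forall>k. \<forall>i\<in>{1..n}. is_straight (\<theta> (crown_edge n k i)) = (k = c)"
    and "i \<in> {1..n}"
  shows "\<theta> (crown_edge n k i) = crown_edge n (k = c) (fst (snd (\<theta> (crown_edge n k i))))"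
    and "fst (snd (\<theta> (crown_edge n k i))) \<in> {1..n}"
proof -
  have "bij_betw \<theta> (crown_basis n) (crown_basis n)"
    using assms(1,2) by (simp add: carrier_AM_crown)
  then have "\<theta> (crown_edge n k i) \<in> crown_basis n"
    using assms(4) by (simp add: bij_betw_apply crown_edge_in_basis)
  then obtain l j where j: "j \<in> {1..n}" and image: "\<theta> (crown_edge n k i) = crown_edge n l j"
    by (rule crown_basisE)
  moreover have "l = (k = c)"
    using kinds assms(1,4) j image is_straight_crown_edge by metis
  ultimately show "\<theta> (crown_edge n k i) = crown_edge n (k = c) (fst (snd (\<theta> (crown_edge n k i))))"
    and "fst (snd (\<theta> (crown_edge n k i))) \<in> {1..n}"
    by simp_all
qed

lemma AM_crown_index_permutes:
  assumes "2 \<le> n" "\<theta> \<in> carrier (crown_AM n)"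
    and kinds: "\<forall>k. \<forall>i\<in>{1..n}. is_straight (\<theta> (crown_edge n k i)) = (k = c)"
  shows "(\<lambda>i. if i \<in> {1..n} then fst (snd (\<theta> (crown_edge n k i))) else i) permutes {1..n}"
proof (rule inj_imp_permutes)
  have inj: "inj_on \<theta> (crown_basis n)"
    using assms(1,2) by (simp add: carrier_AM_crown bij_betw_def)
  note image = AM_crown_edge_image[OF assms]
  show "inj_on (\<lambda>i. if i \<in> {1..n} then fst (snd (\<theta> (crown_edge n k i))) else i) {1..n}"
  proof (rule inj_onI)
    fix i j assume i: "i \<in> {1..n}" and j: "j \<in> {1..n}"
      and "(if i \<in> {1..n} then fst (snd (\<theta> (crown_edge n k i))) else i)
         = (if j \<in> {1..n} then fst (snd (\<theta> (crown_edge n k j))) else j)"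
    then have "fst (snd (\<theta> (crown_edge n k i))) = fst (snd (\<theta> (crown_edge n k j)))"
      by simp
    with image(1)[OF i, of k] image(1)[OF j, of k]
    have "\<theta> (crown_edge n k i) = \<theta> (crown_edge n k j)"
      by metis
    with inj i j show "i = j"
      by (simp add: inj_on_eq_iff crown_edge_in_basis)
  qed
qed (use AM_crown_edge_image(2)[OF assms] in auto)

lemma crown_auto_surj:
  assumes "2 \<le> n" "\<theta> \<in> carrier (crown_AM n)"
  shows "\<theta> \<in> crown_auto n ` carrier (sym_wreath n)"
proof -
  obtain c where kinds: "\<forall>k. \<forall>i\<in>{1..n}. is_straight (\<theta> (crown_edge n k i)) = (k = c)"
    using assms by (auto simp: carrier_AM_crown)
  define perm where
    "perm k = (\<lambda>i. if i \<in> {1..n} then fst (snd (\<theta> (crown_edge n k i))) else i)" for k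
  define b :: int where "b = (if c then 0 else 1)"
  have "crown_auto n ((perm c, perm (\<not> c)), b) = \<theta>"
  proof (rule extensionalityI)
    show "crown_auto n ((perm c, perm (\<not> c)), b) \<in> extensional (crown_basis n)"
      by (rule crown_auto_extensional)
    show "\<theta> \<in> extensional (crown_basis n)"
      using assms by (simp add: carrier_AM_crown)
  next
    fix e assume "e \<in> crown_basis n"
    then obtain k i where i: "i \<in> {1..n}" and e: "e = crown_edge n k i"
      by (rule crown_basisE)
    have "crown_auto n ((perm c, perm (\<not> c)), b) e = crown_edge n (k = c) (perm k i)"
      unfolding e crown_auto_edge[OF assms(1) i] by (cases c) (auto simp: b_def)
    also have "\<dots> = crown_edge n (k = c) (fst (snd (\<theta> (crown_edge n k i))))"
      using i by (simp add: perm_def)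
    also have "\<dots> = \<theta> e"
      unfolding e by (rule AM_crown_edge_image(1)[OF assms kinds i, symmetric])
    finally show "crown_auto n ((perm c, perm (\<not> c)), b) e = \<theta> e" .
  qed
  moreover have "((perm c, perm (\<not> c)), b) \<in> carrier (sym_wreath n)"
    using AM_crown_index_permutes[OF assms kinds] by (simp add: carrier_sym_wreath perm_def b_def)
  ultimately show ?thesis by blast
qed

lemma crown_auto_iso:
  assumes "2 \<le> n"
  shows "crown_auto n \<in> iso (sym_wreath n) (crown_AM n)"
proof (rule isoI)
  have in_carrier: "crown_auto n x \<in> carrier (crown_AM n)"
    if "x \<in> carrier (sym_wreath n)" for x
    using that crown_auto_in_carrier[OF assms] by (auto simp: carrier_sym_wreath)
  show "crown_auto n \<in> hom (sym_wreath n) (crown_AM n)"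
  proof (rule homI)
    fix x y assume "x \<in> carrier (sym_wreath n)" "y \<in> carrier (sym_wreath n)"
    moreover obtain s t b s' t' b' where "x = ((s, t), b)" "y = ((s', t'), b')"
      by (metis surj_pair)
    ultimately show "crown_auto n (x \<otimes>\<^bsub>sym_wreath n\<^esub> y)
        = crown_auto n x \<otimes>\<^bsub>crown_AM n\<^esub> crown_auto n y"
      using crown_auto_mult[OF assms] by blast
  qed (rule in_carrier)
  have "inj_on (crown_auto n) (carrier (sym_wreath n))"
  proof (rule inj_onI)
    fix x y assume "x \<in> carrier (sym_wreath n)" "y \<in> carrier (sym_wreath n)"
      and "crown_auto n x = crown_auto n y"
    moreover obtain s t b s' t' b' where "x = ((s, t), b)" "y = ((s', t'), b')"
      by (metis surj_pair)
    ultimately show "x = y"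
      using crown_auto_eqD[OF assms] by blast
  qed
  moreover have "crown_auto n ` carrier (sym_wreath n) = carrier (crown_AM n)"
    using in_carrier crown_auto_surj[OF assms] by blast
  ultimately show "bij_betw (crown_auto n) (carrier (sym_wreath n)) (carrier (crown_AM n))"
    by (simp add: bij_betw_def)
qed

theorem proposition4p10:
  fixes n :: nat
  assumes "n \<ge> 2"
  shows "\<exists>\<phi>. aut_action (sym_group n \<times>\<times> sym_group n) (integer_mod_group 2) \<phi> \<and>
           AM_group (crown_carrier n) (crown_le n)
             \<cong> semidirect_prod (sym_group n \<times>\<times> sym_group n) (integer_mod_group 2) \<phi>"
proof -
  have "sym_wreath n \<cong> crown_AM n"
    using crown_auto_iso[OF assms] by (rule is_isoI)
  then have "crown_AM n \<cong> sym_wreath n"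
    by (rule group.iso_sym[OF group_sym_wreath])
  with aut_action_swap show ?thesis by blast
qed

end
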